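(* Fix an integer base $B\ge 2$. Let $m$ be a positive integer such that $mn$ is economical for every economical positive integer $n$. Then $m$ is frugal.
   Context: For a positive integer $n$, $\delta(n)$ is the number of digits of $n$ in base $B$, i.e. $\delta(n)=k$ iff $B^{k-1}\le n<B^k$. Define $\delta'(1)=0$ and $\delta'(a)=\delta(a)$ for $a>1$. If $n=\prod_{i} p_i^{a_i}$ is the prime power factorisation, set $\phi(n)=\sum_i \big(\delta(p_i)+\delta'(a_i)\big)$ (with $\phi(1)=0$), and $h(n)=\delta(n)-\phi(n)$. $n$ is economical if $h(n)\ge0$ and frugal if $h(n)>0$. *)

theory Defs
  imports "HOL-Computational_Algebra.Primes"
begin

definition num_digits :: "nat \<Rightarrow> nat \<Rightarrow> nat" where
  "num_digits B n = (LEAST k. n < B ^ k)"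

definition num_digits' :: "nat \<Rightarrow> nat \<Rightarrow> nat" where
  "num_digits' B a = (if a = 1 then 0 else num_digits B a)"

text \<open>Number of digits needed to write the prime factorisation of n.\<close>
definition fact_digits :: "nat \<Rightarrow> nat \<Rightarrow> nat" where
  "fact_digits B n =
     (\<Sum>p\<in>prime_factors n. num_digits B p + num_digits' B (multiplicity p n))"

definition h_fun :: "nat \<Rightarrow> nat \<Rightarrow> int" where
  "h_fun B n = int (num_digits B n) - int (fact_digits B n)"

definition economical :: "nat \<Rightarrow> nat \<Rightarrow> bool" where
  "economical B n \<longleftrightarrow> h_fun B n \<ge> 0"

definition frugal :: "nat \<Rightarrow> nat \<Rightarrow> bool" where
  "frugal B n \<longleftrightarrow> h_fun B n > 0"

end

(*
  Let e(n) = delta(n) - log_B n, which lies in (0, 1]. If e(m) + e(n) > 1 then m n has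
  delta(m) + delta(n) - 1 digits, so for coprime m, n we get h(m n) = h(m) + h(n) - 1. It therefore
  suffices to find, for every eps > 0, some n coprime to m with h(n) = 0 and e(n) > 1 - eps:
  then m n is economical, and h(m n) >= 0 forces h(m) >= 1.

  Such an n is q1^A q2^C p_1 ... p_k with primes m < q1 < q2 < p_1 < ... < p_k. The sum of e(p)
  over all primes diverges (the Euler product of p/(p-1) dominates the harmonic series) while
  each term is at most 1, so the p_i can be chosen with e(p_1) + ... + e(p_k) in any prescribed
  window of length 1. As log q1 / log q2 is irrational, Kronecker's theorem yields u, v with
  0 < u log_B q1 - v log_B q2 < eps; shifting (A, C) by multiples of (u, -v) leaves delta(A) and
  delta(C) unchanged and moves log_B n in steps below eps, into [phi(n) - 1, phi(n) - 1 + eps).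
*)

theory Submission
  imports Defs
    "HOL-Analysis.Harmonic_Numbers"
    "HOL-Analysis.Kronecker_Approximation_Theorem"
    "HOL-Real_Asymp.Real_Asymp"
begin

section \<open>Number of digits\<close>

lemma less_power_of_base_ge_2:
  fixes B k :: nat
  assumes "B \<ge> 2"
  shows "k < B ^ k"
proof -
  have "k < 2 ^ k" by (rule less_exp)
  also have "\<dots> \<le> B ^ k" using assms by (intro power_mono) auto
  finally show ?thesis .
qed

lemma less_power_num_digits:
  assumes "B \<ge> 2"
  shows "n < B ^ num_digits B n"
  unfolding num_digits_def using less_power_of_base_ge_2[OF assms] by (rule LeastI)

lemma num_digits_pos:
  assumes "B \<ge> 2" "n > 0"
  shows "num_digits B n > 0"
  using less_power_num_digits[OF assms(1), of n] assms(2) by (cases "num_digits B n") auto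

lemma power_num_digits_le:
  assumes "B \<ge> 2" "n > 0"
  shows "B ^ (num_digits B n - 1) \<le> n"
proof -
  have "\<not> n < B ^ (num_digits B n - 1)"
    unfolding num_digits_def
    by (rule not_less_Least) (use num_digits_pos[OF assms] in \<open>simp add: num_digits_def\<close>)
  then show ?thesis by simp
qed

lemma num_digits_eqI:
  assumes "B \<ge> 2" "k > 0" "B ^ (k - 1) \<le> n" "n < B ^ k"
  shows "num_digits B n = k"
  unfolding num_digits_def
proof (rule Least_equality)
  show "n < B ^ k" by fact
  fix l assume "n < B ^ l"
  show "k \<le> l"
  proof (rule ccontr)
    assume "\<not> k \<le> l"
    then have "B ^ l \<le> B ^ (k - 1)" using assms(1) by (intro power_increasing) auto
    with \<open>n < B ^ l\<close> assms(3) show False by simp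
  qed
qed

lemma num_digits_eqI_log:
  assumes "B \<ge> 2" "n > 0" "real k - 1 \<le> log B n" "log B n < real k"
  shows "num_digits B n = k"
proof (rule num_digits_eqI[OF assms(1)])
  have B: "real B > 1" using assms(1) by simp
  have "0 \<le> log B n" using B assms(2) by simp
  then show "k > 0" using assms(4) by linarith
  then have "real (k - 1) \<le> log B n" using assms(3) by simp
  then have "real B ^ (k - 1) \<le> real n"
    using B assms(2) by (simp add: le_log_iff powr_realpow)
  then show "B ^ (k - 1) \<le> n" by (metis of_nat_le_iff of_nat_power)
  have "real n < real B ^ k" using B assms(2,4) by (simp add: log_less_iff powr_realpow)
  then show "n < B ^ k" by (metis of_nat_less_iff of_nat_power)
qed

lemma num_digits_power_add:
  assumes "B \<ge> 2" "t < B ^ a"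
  shows "num_digits B (B ^ a + t) = a + 1"
proof (rule num_digits_eqI[OF assms(1)])
  have "B ^ a + t < 2 * B ^ a" using assms(2) by simp
  also have "\<dots> \<le> B * B ^ a" using assms(1) by (rule mult_le_mono1)
  finally show "B ^ a + t < B ^ (a + 1)" by simp
qed auto

lemma power_le_power_Suc_diff:
  fixes B t c :: nat
  assumes "B \<ge> 2" "t < B ^ c"
  shows "B ^ c \<le> B ^ (c + 1) - 1 - t"
proof -
  have "2 * B ^ c \<le> B * B ^ c" using assms(1) by (rule mult_le_mono1)
  then have "B ^ c \<le> B * B ^ c - 1 - t" using assms(2) by linarith
  then show ?thesis by simp
qed

lemma num_digits_power_diff:
  assumes "B \<ge> 2" "t < B ^ c"
  shows "num_digits B (B ^ (c + 1) - 1 - t) = c + 1"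
  using power_le_power_Suc_diff[OF assms] assms(1) by (intro num_digits_eqI) auto

definition digit_excess :: "nat \<Rightarrow> nat \<Rightarrow> real" where
  "digit_excess B n = real (num_digits B n) - log B n"

lemma digit_excess_pos:
  assumes "B \<ge> 2" "n > 0"
  shows "digit_excess B n > 0"
proof -
  have "real n < real B ^ num_digits B n"
    using less_power_num_digits[OF assms(1)] by (metis of_nat_less_iff of_nat_power)
  then show ?thesis
    unfolding digit_excess_def using log_of_power_less assms by simp
qed

lemma digit_excess_le_one:
  assumes "B \<ge> 2" "n > 0"
  shows "digit_excess B n \<le> 1"
proof -
  have "real B ^ (num_digits B n - 1) \<le> real n"
    using power_num_digits_le[OF assms] by (metis of_nat_le_iff of_nat_power)
  then show ?thesis
    unfolding digit_excess_def using le_log_of_power num_digits_pos[OF assms] assms(1)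
    by fastforce
qed

lemma num_digits_digit_excess_eqI:
  assumes "B \<ge> 2" "n > 0" "log B n = real k - 1 + x" "0 \<le> x" "x < 1"
  shows "num_digits B n = k" "digit_excess B n = 1 - x"
proof -
  show "num_digits B n = k" using assms by (intro num_digits_eqI_log) auto
  then show "digit_excess B n = 1 - x" unfolding digit_excess_def using assms(3) by simp
qed

lemma num_digits_mult:
  assumes "B \<ge> 2" "m > 0" "n > 0" "digit_excess B m + digit_excess B n > 1"
  shows "num_digits B (m * n) = num_digits B m + num_digits B n - 1"
proof (rule num_digits_eqI_log[OF assms(1)])
  show "m * n > 0" using assms(2,3) by simp
  have "log B (m * n) = num_digits B m + num_digits B n - (digit_excess B m + digit_excess B n)"
    using assms(1-3) by (simp add: digit_excess_def log_mult)
  moreover have "num_digits B m > 0" "num_digits B n > 0"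
    using num_digits_pos assms by auto
  ultimately show "real (num_digits B m + num_digits B n - 1) - 1 \<le> log B (m * n)"
      "log B (m * n) < real (num_digits B m + num_digits B n - 1)"
    using assms(4) digit_excess_le_one[OF assms(1,2)] digit_excess_le_one[OF assms(1,3)]
    by auto
qed

section \<open>Digits of factorisations\<close>

lemma fact_digits_mult_coprime:
  assumes "a > 0" "b > 0" "coprime a b"
  shows "fact_digits B (a * b) = fact_digits B a + fact_digits B b"
proof -
  have disjoint: "prime_factors a \<inter> prime_factors b = {}"
    using assms(3) by (auto simp: in_prime_factors_iff dest: coprime_common_divisor_nat)
  have multiplicity_mult: "multiplicity p (x * y) = multiplicity p x"
    if "x > 0" "y > 0" "p \<in> prime_factors x" "p \<notin> prime_factors y" for p x y :: nat
    using that
    by (auto simp: prime_elem_multiplicity_mult_distrib not_dvd_imp_multiplicity_0 in_prime_factors_iff)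
  have mult_a: "multiplicity p (a * b) = multiplicity p a" if "p \<in> prime_factors a" for p
    using multiplicity_mult[of a b p] that disjoint assms(1,2) by blast
  have mult_b: "multiplicity p (a * b) = multiplicity p b" if "p \<in> prime_factors b" for p
    using multiplicity_mult[of b a p] that disjoint assms(1,2) by (auto simp: mult.commute)
  have "fact_digits B (a * b) =
      (\<Sum>p\<in>prime_factors a. num_digits B p + num_digits' B (multiplicity p (a * b))) +
      (\<Sum>p\<in>prime_factors b. num_digits B p + num_digits' B (multiplicity p (a * b)))"
    unfolding fact_digits_def using assms(1,2) disjoint
    by (simp add: prime_factors_product sum.union_disjoint)
  also have "\<dots> = fact_digits B a + fact_digits B b"
    unfolding fact_digits_def using mult_a mult_b by simp
  finally show ?thesis .
qed

lemma coprime_if_prime_factors_greater: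
  fixes m n :: nat
  assumes "m > 0" "n > 0" "\<And>p. p \<in> prime_factors n \<Longrightarrow> m < p"
  shows "coprime m n"
proof (rule ccontr)
  assume "\<not> coprime m n"
  then obtain p where "prime p" "p dvd gcd m n"
    using prime_factor_nat[of "gcd m n"] by (auto simp: coprime_iff_gcd_eq_1)
  then have "p \<in> prime_factors n" "p \<le> m"
    using assms(1,2) by (auto simp: in_prime_factors_iff dvd_imp_le)
  with assms(3) show False by fastforce
qed

lemma prime_factors_prod_prime_powers:
  fixes f :: "nat \<Rightarrow> nat"
  assumes "finite S" "\<And>p. p \<in> S \<Longrightarrow> prime p" "\<And>p. p \<in> S \<Longrightarrow> f p > 0"
  shows "prime_factors (\<Prod>p\<in>S. p ^ f p) = S"
proof -
  have "p \<in> S \<longleftrightarrow> multiplicity p (\<Prod>p\<in>S. p ^ f p) > 0" if "prime p" for p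
    using assms that by (simp add: multiplicity_prod_prime_powers)
  then show ?thesis using assms(2) by (auto simp: prime_factors_multiplicity)
qed

lemma fact_digits_prod_prime_powers:
  fixes f :: "nat \<Rightarrow> nat"
  assumes "finite S" "\<And>p. p \<in> S \<Longrightarrow> prime p" "\<And>p. p \<in> S \<Longrightarrow> f p > 0"
  shows "fact_digits B (\<Prod>p\<in>S. p ^ f p) = (\<Sum>p\<in>S. num_digits B p + num_digits' B (f p))"
  unfolding fact_digits_def
  by (subst prime_factors_prod_prime_powers[OF assms])
    (use assms(1,2) in \<open>auto simp: multiplicity_prod_prime_powers intro!: sum.cong\<close>)

lemma log_prod_prime_powers:
  fixes B :: nat and S :: "nat set" and f :: "nat \<Rightarrow> nat"
  assumes "finite S" "\<And>p. p \<in> S \<Longrightarrow> prime p" "B \<ge> 2"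
  shows "log B (real (\<Prod>p\<in>S. p ^ f p)) = (\<Sum>p\<in>S. f p * log B p)"
proof -
  have "ln (\<Prod>p\<in>S. real p ^ f p) = (\<Sum>p\<in>S. f p * ln p)"
    using assms(1,2) by (simp add: ln_prod ln_realpow prime_gt_0_nat)
  then show ?thesis by (simp add: log_def sum_divide_distrib)
qed

context
  fixes q1 q2 A C :: nat and P :: "nat set"
  assumes primes: "prime q1" "prime q2" "q1 < q2" "finite P" "\<And>p. p \<in> P \<Longrightarrow> prime p \<and> q2 < p"
    and exponents: "A \<ge> 2" "C \<ge> 2"
begin

private abbreviation exponent :: "nat \<Rightarrow> nat" where
  "exponent p \<equiv> if p = q1 then A else if p = q2 then C else 1"

private lemma exponent_simps: "exponent q1 = A" "exponent q2 = C" "\<And>p. p \<in> P \<Longrightarrow> exponent p = 1"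
  and not_in_primes: "q1 \<notin> P" "q2 \<notin> P"
  using primes(3) primes(5)[of q1] primes(5)[of q2] primes(5) by force+

private lemma prime_powers_times_primes_eq_prod:
  "q1 ^ A * q2 ^ C * \<Prod>P = (\<Prod>p\<in>insert q1 (insert q2 P). p ^ exponent p)"
proof -
  have "(\<Prod>p\<in>P. p ^ exponent p) = \<Prod>P" by (rule prod.cong) (simp_all add: exponent_simps(3))
  then show ?thesis using primes(3,4) not_in_primes by (simp add: exponent_simps(1,2) mult.assoc)
qed

private lemma prime_powers_times_primes_factorization:
  "finite (insert q1 (insert q2 P))" "\<And>p. p \<in> insert q1 (insert q2 P) \<Longrightarrow> prime p"
  "\<And>p. p \<in> insert q1 (insert q2 P) \<Longrightarrow> exponent p > 0"
  using primes exponents by auto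

lemma prime_factors_prime_powers_times_primes:
  "prime_factors (q1 ^ A * q2 ^ C * \<Prod>P) = insert q1 (insert q2 P)"
  unfolding prime_powers_times_primes_eq_prod
  by (rule prime_factors_prod_prime_powers[OF prime_powers_times_primes_factorization])

lemma fact_digits_prime_powers_times_primes:
  "fact_digits B (q1 ^ A * q2 ^ C * \<Prod>P) =
    num_digits B q1 + num_digits B A + num_digits B q2 + num_digits B C + (\<Sum>p\<in>P. num_digits B p)"
proof -
  have "fact_digits B (q1 ^ A * q2 ^ C * \<Prod>P) =
      (\<Sum>p\<in>insert q1 (insert q2 P). num_digits B p + num_digits' B (exponent p))"
    unfolding prime_powers_times_primes_eq_prod
    by (rule fact_digits_prod_prime_powers[OF prime_powers_times_primes_factorization])
  also have "\<dots> = num_digits B q1 + num_digits B A + num_digits B q2 + num_digits B C +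
      (\<Sum>p\<in>P. num_digits B p)"
    using primes(3,4) not_in_primes exponents
    by (simp add: exponent_simps num_digits'_def sum.distrib)
  finally show ?thesis .
qed

lemma log_prime_powers_times_primes:
  fixes B :: nat
  assumes "B \<ge> 2"
  shows "log B (q1 ^ A * q2 ^ C * \<Prod>P) = A * log B q1 + C * log B q2 + (\<Sum>p\<in>P. log B p)"
proof -
  have "log B (q1 ^ A * q2 ^ C * \<Prod>P) = (\<Sum>p\<in>insert q1 (insert q2 P). exponent p * log B p)"
    unfolding prime_powers_times_primes_eq_prod
    by (rule log_prod_prime_powers[OF prime_powers_times_primes_factorization(1,2) assms])
  also have "\<dots> = A * log B q1 + C * log B q2 + (\<Sum>p\<in>P. log B p)"
    using primes(3,4) not_in_primes by (simp add: exponent_simps)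
  finally show ?thesis .
qed

end

section \<open>Primes with prescribed total digit excess\<close>

lemma sum_power_inverse_le:
  assumes "p \<ge> 2"
  shows "(\<Sum>k\<le>N. (1 / real p) ^ k) \<le> real p / (real p - 1)"
proof -
  have "(\<Sum>k\<le>N. (1 / real p) ^ k) \<le> (\<Sum>k. (1 / real p) ^ k)"
    using assms by (intro sum_le_suminf summable_geometric) auto
  also have "\<dots> = real p / (real p - 1)"
    using assms by (subst suminf_geometric) (auto simp: field_simps)
  finally show ?thesis .
qed

lemma sum_inverse_smooth_le_prod:
  fixes S U :: "nat set"
  assumes "finite S" "\<And>p. p \<in> S \<Longrightarrow> prime p"
    and "finite U" "\<And>n. n \<in> U \<Longrightarrow> n > 0 \<and> prime_factors n \<subseteq> S"
  shows "(\<Sum>n\<in>U. 1 / real n) \<le> (\<Prod>p\<in>S. real p / (real p - 1))"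
proof -
  define N where "N = Max ((\<lambda>(p, n). multiplicity p n) ` (S \<times> U))"
  define e where "e n = restrict (\<lambda>p. multiplicity p n) S" for n
  have factor: "(\<Prod>p\<in>S. p ^ e n p) = n" if "n \<in> U" for n
  proof -
    have "n = (\<Prod>p\<in>prime_factors n. p ^ multiplicity p n)"
      using that assms(4) by (simp add: prime_factorization_nat[symmetric])
    also have "\<dots> = (\<Prod>p\<in>S. p ^ multiplicity p n)"
      using that assms by (intro prod.mono_neutral_left) (auto simp: prime_factors_multiplicity)
    finally show ?thesis unfolding e_def by simp
  qed
  have inverse_factor: "1 / real n = (\<Prod>p\<in>S. (1 / real p) ^ e n p)" if "n \<in> U" for n
  proof -
    have "real (\<Prod>p\<in>S. p ^ e n p) = real n" using factor[OF that] by simp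
    then have "(\<Prod>p\<in>S. real p ^ e n p) = real n" by simp
    then show ?thesis by (simp add: power_one_over prod_dividef)
  qed
  have "inj_on e U"
    by (rule inj_onI) (metis factor)
  have e_range: "e ` U \<subseteq> PiE S (\<lambda>_. {..N})"
    using assms(1,3) by (auto simp: e_def N_def intro!: Max_ge)
  have "(\<Sum>n\<in>U. 1 / real n) = (\<Sum>n\<in>U. \<Prod>p\<in>S. (1 / real p) ^ e n p)"
    by (rule sum.cong[OF refl inverse_factor])
  also have "\<dots> = (\<Sum>g\<in>e ` U. \<Prod>p\<in>S. (1 / real p) ^ g p)"
    using \<open>inj_on e U\<close> by (simp add: sum.reindex)
  also have "\<dots> \<le> (\<Sum>g\<in>PiE S (\<lambda>_. {..N}). \<Prod>p\<in>S. (1 / real p) ^ g p)"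
    using e_range assms(1) by (intro sum_mono2 finite_PiE) (auto intro: prod_nonneg)
  also have "\<dots> = (\<Prod>p\<in>S. \<Sum>k\<le>N. (1 / real p) ^ k)"
    using assms(1) by (rule prod_sum_PiE[symmetric]) simp
  also have "\<dots> \<le> (\<Prod>p\<in>S. real p / (real p - 1))"
    using assms(2) by (intro prod_mono) (auto simp: sum_nonneg sum_power_inverse_le prime_ge_2_nat)
  finally show ?thesis .
qed

lemma ln_le_prod_primes:
  "ln (real x + 1) \<le> (\<Prod>p | prime p \<and> p \<le> x. real p / (real p - 1))"
proof -
  have "ln (real x + 1) \<le> (harm x :: real)" by (rule ln_le_harm)
  also have "\<dots> = (\<Sum>n\<in>{1..x}. 1 / real n)"
    unfolding harm_def by (simp add: inverse_eq_divide)
  also have "\<dots> \<le> (\<Prod>p | prime p \<and> p \<le> x. real p / (real p - 1))"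
    by (rule sum_inverse_smooth_le_prod) (fastforce dest: dvd_imp_le)+
  finally show ?thesis .
qed

lemma ln_ratio_le_digit_excess:
  assumes "B \<ge> 2" "n \<ge> 2"
  shows "ln (real n / (real n - 1)) \<le> 2 * ln B * digit_excess B n"
proof -
  have n: "real n \<ge> 2" using assms(2) by linarith
  have "n + 1 \<le> B ^ num_digits B n" using less_power_num_digits[OF assms(1)] by (simp add: Suc_le_eq)
  then have "real n + 1 \<le> real B ^ num_digits B n" by (metis of_nat_1 of_nat_add of_nat_le_iff of_nat_power)
  then have "ln (real n + 1) \<le> ln (real B ^ num_digits B n)"
    using n assms(1) by (subst ln_le_cancel_iff) auto
  also have "\<dots> = num_digits B n * ln B"
    using assms(1) by (simp add: ln_realpow)
  finally have "ln (real n + 1) \<le> num_digits B n * ln B" .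
  then have excess: "ln ((real n + 1) / real n) \<le> ln B * digit_excess B n"
    using n assms(1) by (simp add: digit_excess_def log_def ln_div field_simps)
  have "2 * 1 \<le> real n * (real n - 1)" using n by (intro mult_mono) auto
  then have "real n * real n * real n \<le> (real n - 1) * (real n + 1) ^ 2"
    by (simp add: power2_eq_square algebra_simps)
  then have "real n / (real n - 1) \<le> ((real n + 1) / real n) ^ 2"
    using n by (simp add: power2_eq_square field_simps)
  then have "ln (real n / (real n - 1)) \<le> ln (((real n + 1) / real n) ^ 2)"
    using n by (subst ln_le_cancel_iff) auto
  also have "\<dots> = 2 * ln ((real n + 1) / real n)"
    using n by (simp add: ln_realpow)
  finally show ?thesis using excess by simp
qed

lemma sum_digit_excess_primes_unbounded:
  assumes "B \<ge> 2"
  shows "\<exists>x. G \<le> (\<Sum>p | prime p \<and> K < p \<and> p \<le> x. digit_excess B p)"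
proof -
  let ?f = "\<lambda>p. real p / (real p - 1)"
  have f_pos: "?f p > 0" if "prime p" for p
    using prime_ge_2_nat[OF that] by simp
  define C where "C = (\<Prod>p | prime p \<and> p \<le> K. ?f p)"
  have "C > 0" unfolding C_def using f_pos by (intro prod_pos) auto
  define x where "x = max K (nat \<lceil>exp (C * exp (2 * ln B * G))\<rceil>)"
  have "exp (C * exp (2 * ln B * G)) \<le> real x + 1"
    unfolding x_def by linarith
  then have "C * exp (2 * ln B * G) \<le> ln (real x + 1)"
    by (simp add: ln_ge_iff)
  also have "\<dots> \<le> (\<Prod>p | prime p \<and> p \<le> x. ?f p)"
    by (rule ln_le_prod_primes)
  also have "{p. prime p \<and> p \<le> x} = {p. prime p \<and> p \<le> K} \<union> {p. prime p \<and> K < p \<and> p \<le> x}"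
    unfolding x_def by auto
  also have "(\<Prod>p\<in>\<dots>. ?f p) = C * (\<Prod>p | prime p \<and> K < p \<and> p \<le> x. ?f p)"
    unfolding C_def by (rule prod.union_disjoint) auto
  finally have "exp (2 * ln B * G) \<le> (\<Prod>p | prime p \<and> K < p \<and> p \<le> x. ?f p)"
    using \<open>C > 0\<close> by simp
  then have "2 * ln B * G \<le> ln (\<Prod>p | prime p \<and> K < p \<and> p \<le> x. ?f p)"
    by (subst ln_ge_iff) (auto intro: less_le_trans[OF exp_gt_zero])
  also have "\<dots> = (\<Sum>p | prime p \<and> K < p \<and> p \<le> x. ln (?f p))"
    using f_pos by (intro ln_prod) auto
  also have "\<dots> \<le> (\<Sum>p | prime p \<and> K < p \<and> p \<le> x. 2 * ln B * digit_excess B p)"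
    using assms by (intro sum_mono ln_ratio_le_digit_excess) (auto simp: prime_ge_2_nat)
  finally have "G \<le> (\<Sum>p | prime p \<and> K < p \<and> p \<le> x. digit_excess B p)"
    using assms by (simp add: sum_distrib_left[symmetric])
  then show ?thesis ..
qed

lemma unit_steps_hit_window:
  fixes f :: "nat \<Rightarrow> real"
  assumes "\<And>x. f (Suc x) \<le> f x + 1" "f 0 \<le> G" "G \<le> f y"
  obtains x where "G \<le> f x" "f x < G + 1"
proof -
  define x where "x = (LEAST x. G \<le> f x)"
  have "G \<le> f x" unfolding x_def using assms(3) by (rule LeastI)
  moreover have "f x < G + 1"
  proof (cases x)
    case 0
    with \<open>G \<le> f x\<close> assms(2) show ?thesis by simp
  next
    case (Suc z)
    then have "\<not> G \<le> f z" using not_less_Least[of z "\<lambda>x. G \<le> f x"] unfolding x_def by simp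
    with assms(1)[of z] Suc show ?thesis by simp
  qed
  ultimately show ?thesis by (rule that)
qed

lemma exists_primes_digit_excess_window:
  assumes "B \<ge> 2" "G \<ge> 0"
  obtains P where "finite P" "\<And>p. p \<in> P \<Longrightarrow> prime p \<and> K < p"
    "G \<le> (\<Sum>p\<in>P. digit_excess B p)" "(\<Sum>p\<in>P. digit_excess B p) < G + 1"
proof -
  define E where "E x = (\<Sum>p | prime p \<and> K < p \<and> p \<le> x. digit_excess B p)" for x
  have "E (Suc x) \<le> E x + 1" for x
  proof (cases "prime (Suc x) \<and> K < Suc x")
    case True
    then have "{p. prime p \<and> K < p \<and> p \<le> Suc x} = insert (Suc x) {p. prime p \<and> K < p \<and> p \<le> x}"
      by (auto simp: le_Suc_eq)
    then show ?thesis
      unfolding E_def using digit_excess_le_one[OF assms(1), of "Suc x"] by simp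
  next
    case False
    then have "{p. prime p \<and> K < p \<and> p \<le> Suc x} = {p. prime p \<and> K < p \<and> p \<le> x}"
      by (auto simp: le_Suc_eq)
    then show ?thesis unfolding E_def by simp
  qed
  moreover have "E 0 \<le> G" unfolding E_def using assms(2) by (subst sum.neutral) auto
  moreover obtain y where "G \<le> E y"
    unfolding E_def using sum_digit_excess_primes_unbounded[OF assms(1)] by blast
  ultimately obtain x where "G \<le> E x" "E x < G + 1" by (rule unit_steps_hit_window)
  then show ?thesis unfolding E_def by (intro that) auto
qed

section \<open>Small positive combinations of logarithms\<close>

lemma ln_ratio_primes_irrational:
  assumes "prime p" "prime q" "p \<noteq> q"
  shows "ln (real p) / ln (real q) \<notin> \<rat>"
proof
  assume "ln (real p) / ln (real q) \<in> \<rat>"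
  then obtain a b :: int where "b > 0" and ratio: "ln (real p) / ln (real q) = a / b"
    by (metis Rats_cases')
  have ln_pos: "ln (real p) > 0" "ln (real q) > 0"
    using prime_gt_1_nat[OF assms(1)] prime_gt_1_nat[OF assms(2)] by simp_all
  then have eq: "b * ln (real p) = a * ln (real q)"
    using ratio \<open>b > 0\<close> by (simp add: field_simps)
  then have "a > 0"
    using ln_pos \<open>b > 0\<close> by (metis mult_pos_pos of_int_0_less_iff zero_less_mult_pos2)
  with eq \<open>b > 0\<close> have "ln (real p ^ nat b) = ln (real q ^ nat a)"
    using ln_pos by (simp add: ln_realpow)
  then have "p ^ nat b = q ^ nat a"
    using assms(1,2) by (simp add: prime_gt_0_nat flip: of_nat_power)
  with assms \<open>a > 0\<close> \<open>b > 0\<close> show False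
    by (simp add: prime_power_inj'')
qed

lemma exists_small_positive_combination:
  fixes \<alpha> \<beta> \<epsilon> :: real
  assumes "\<alpha> > 0" "\<beta> > 0" "\<alpha> / \<beta> \<notin> \<rat>" "\<epsilon> > 0"
  obtains u v :: nat where "u > 0" "0 < u * \<alpha> - v * \<beta>" "u * \<alpha> - v * \<beta> < \<epsilon>"
proof -
  define t where "t = min 1 (\<epsilon> / \<beta>) / 2"
  have t: "0 < t" "t \<le> 1" "2 * t * \<beta> \<le> \<epsilon>"
    using assms unfolding t_def by (auto simp: min_def field_simps)
  obtain u :: nat where "u > 0" and u: "\<bar>frac (u * (\<alpha> / \<beta>)) - t\<bar> < t"
    using Kronecker_approx_1_explicit[OF assms(3) less_imp_le[OF t(1)] t(2) t(1)] by blast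
  define v where "v = nat \<lfloor>u * (\<alpha> / \<beta>)\<rfloor>"
  define \<phi> where "\<phi> = frac (u * (\<alpha> / \<beta>))"
  have combination: "u * \<alpha> - v * \<beta> = \<beta> * \<phi>"
    using assms(1,2) by (simp add: v_def \<phi>_def frac_def field_simps)
  have "0 < \<phi>" "\<phi> < 2 * t"
    using u unfolding \<phi>_def by linarith+
  then have "0 < \<beta> * \<phi>" "\<beta> * \<phi> < \<beta> * (2 * t)"
    using assms(2) by simp_all
  then have "0 < u * \<alpha> - v * \<beta>" "u * \<alpha> - v * \<beta> < \<epsilon>"
    using combination t(3) by (simp_all add: mult.commute)
  with \<open>u > 0\<close> show ?thesis by (rule that)
qed

lemma exists_small_log_combination:
  fixes B p q :: nat
  assumes "B \<ge> 2" "prime p" "prime q" "p \<noteq> q" "\<epsilon> > 0"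
  obtains u v :: nat where "u > 0" "0 < u * log B p - v * log B q" "u * log B p - v * log B q < \<epsilon>"
proof (rule exists_small_positive_combination)
  show "log B p > 0" "log B q > 0"
    using assms(1) prime_gt_1_nat[OF assms(2)] prime_gt_1_nat[OF assms(3)] by simp_all
  show "log B p / log B q \<notin> \<rat>"
    using ln_ratio_primes_irrational[OF assms(2-4)] assms(1) by (simp add: log_def)
qed (use assms(5) in auto)

section \<open>Equidigital numbers with digit excess close to one\<close>

lemma exists_multiple_in_window:
  fixes s d :: real
  assumes "s > 0" "0 \<le> d" "d < 1"
  obtains j :: nat where "j \<le> nat \<lceil>1 / s\<rceil>" "0 \<le> j * s - d" "j * s - d < s"
proof
  define j where "j = nat \<lceil>d / s\<rceil>"
  have "real j = \<lceil>d / s\<rceil>" unfolding j_def using assms(1,2) by simp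
  then have "d / s \<le> j" "j < d / s + 1" by linarith+
  then show "0 \<le> j * s - d" "j * s - d < s"
    using assms(1) by (simp_all add: field_simps)
  have "d / s \<le> 1 / s" using assms by (simp add: divide_right_mono)
  then show "j \<le> nat \<lceil>1 / s\<rceil>" unfolding j_def by (intro nat_mono ceiling_mono)
qed

lemma exists_exponent_dominating:
  fixes B N :: nat and \<alpha> K :: real
  assumes "B \<ge> 2" "\<alpha> > 0"
  obtains a where "a \<ge> N" "real a + K \<le> real B ^ a * \<alpha>"
proof -
  have "\<forall>\<^sub>F a in sequentially. real a + K \<le> 2 ^ a * \<alpha>"
    using assms(2) by real_asymp
  then obtain M where M: "\<And>a. a \<ge> M \<Longrightarrow> real a + K \<le> 2 ^ a * \<alpha>"
    by (auto simp: eventually_sequentially)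
  have "real (max M N) + K \<le> 2 ^ max M N * \<alpha>" by (rule M) simp
  also have "\<dots> \<le> real B ^ max M N * \<alpha>"
    using assms by (intro mult_right_mono power_mono) auto
  finally show ?thesis by (rule that[rotated]) simp
qed

text \<open>The pair \<open>(A, C) = (B\<^sup>a + j u, B\<^sup>c\<^sup>+\<^sup>1 - 1 - j v)\<close> keeps its digit counts for
  \<open>j \<le> 1/s\<close>, while \<open>A \<alpha> + C \<beta>\<close> grows by \<open>s = u \<alpha> - v \<beta>\<close> with each step in \<open>j\<close>.\<close>

lemma exists_exponents_in_window:
  fixes \<alpha> \<beta> R :: real and u v :: nat
  assumes "B \<ge> 2" "\<alpha> > 0" "\<beta> > 0" "0 < u * \<alpha> - v * \<beta>"
  obtains G where "G \<ge> 0"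
    "\<And>d. G \<le> d \<Longrightarrow> d < G + 1 \<Longrightarrow> \<exists>A C. A \<ge> 2 \<and> C \<ge> 2 \<and>
       A * \<alpha> + C * \<beta> - num_digits B A - num_digits B C - R - d \<in> {0..<u * \<alpha> - v * \<beta>}"
proof -
  define s where "s = u * \<alpha> - v * \<beta>"
  define J where "J = nat \<lceil>1 / s\<rceil>"
  define c where "c = J * v + 1"
  have "J * v < B ^ c" using less_power_of_base_ge_2[OF assms(1), of c] unfolding c_def by simp
  define C0 where "C0 = B ^ (c + 1) - 1"
  obtain a where "a \<ge> J * u + 1" and a_large: "real a + (c + 2 + R) \<le> real B ^ a * \<alpha>"
    using exists_exponent_dominating[OF assms(1,2)] by blast
  then have "J * u < B ^ a" using less_power_of_base_ge_2[OF assms(1), of a] by linarith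
  define G where "G = B ^ a * \<alpha> + C0 * \<beta> - (a + 1) - (c + 1) - R"
  show thesis
  proof (rule that)
    have "C0 * \<beta> \<ge> 0" using assms(3) by simp
    then show "G \<ge> 0" unfolding G_def using a_large by simp
    fix d assume "G \<le> d" "d < G + 1"
    with assms(4) obtain j where "j \<le> J" and j: "j * s - (d - G) \<in> {0..<s}"
      using exists_multiple_in_window[of s "d - G"] unfolding s_def J_def by auto
    have "j * u < B ^ a" "j * v < B ^ c"
      using \<open>j \<le> J\<close> \<open>J * u < B ^ a\<close> \<open>J * v < B ^ c\<close> by (meson le_less_trans mult_le_mono1)+
    define A where "A = B ^ a + j * u"
    define C where "C = C0 - j * v"
    have digits: "num_digits B A = a + 1" "num_digits B C = c + 1"
      unfolding A_def C_def C0_def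
      by (rule num_digits_power_add[OF assms(1) \<open>j * u < B ^ a\<close>],
          rule num_digits_power_diff[OF assms(1) \<open>j * v < B ^ c\<close>])
    have C_lower: "B ^ c \<le> C"
      unfolding C_def C0_def by (rule power_le_power_Suc_diff[OF assms(1) \<open>j * v < B ^ c\<close>])
    have "B ^ 1 \<le> B ^ a" "B ^ 1 \<le> B ^ c"
      using assms(1) \<open>a \<ge> J * u + 1\<close> unfolding c_def by (intro power_increasing; simp)+
    then have "A \<ge> 2" "C \<ge> 2" using assms(1) C_lower unfolding A_def by simp_all
    have A_real: "real A = real B ^ a + j * u" unfolding A_def by simp
    have "j * v \<le> C0" using C_lower \<open>j * v < B ^ c\<close> unfolding C_def by arith
    then have C_real: "real C = real C0 - j * v" unfolding C_def by simp
    have "A * \<alpha> + C * \<beta> - num_digits B A - num_digits B C - R - d = j * s - (d - G)"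
      unfolding digits A_real C_real G_def s_def by (simp add: algebra_simps)
    with j have "A * \<alpha> + C * \<beta> - num_digits B A - num_digits B C - R - d \<in> {0..<s}" by simp
    with \<open>A \<ge> 2\<close> \<open>C \<ge> 2\<close> show "\<exists>A C. A \<ge> 2 \<and> C \<ge> 2 \<and>
       A * \<alpha> + C * \<beta> - num_digits B A - num_digits B C - R - d \<in> {0..<u * \<alpha> - v * \<beta>}"
      unfolding s_def by (intro exI[of _ A] exI[of _ C]) simp
  qed
qed

lemma exists_equidigital_with_large_digit_excess:
  assumes "B \<ge> 2" "m > 0" "\<epsilon> > 0"
  obtains n where "n > 0" "coprime m n" "fact_digits B n = num_digits B n" "1 - \<epsilon> < digit_excess B n"
proof -
  obtain q1 q2 where q: "prime q1" "prime q2" "m < q1" "q1 < q2"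
    by (metis bigger_prime)
  define \<alpha> where "\<alpha> = log B q1"
  define \<beta> where "\<beta> = log B q2"
  have "\<alpha> > 0" "\<beta> > 0"
    unfolding \<alpha>_def \<beta>_def using assms(1) prime_gt_1_nat[OF q(1)] prime_gt_1_nat[OF q(2)]
    by simp_all
  have "q1 \<noteq> q2" "min \<epsilon> 1 > 0" using q(4) assms(3) by auto
  then obtain u v :: nat where s: "0 < u * \<alpha> - v * \<beta>" "u * \<alpha> - v * \<beta> < min \<epsilon> 1"
    using exists_small_log_combination[OF assms(1) q(1,2)] unfolding \<alpha>_def \<beta>_def by blast
  define R where "R = real (num_digits B q1 + num_digits B q2) - 1"
  obtain G where "G \<ge> 0" and window: "\<And>d. G \<le> d \<Longrightarrow> d < G + 1 \<Longrightarrow> \<exists>A C. A \<ge> 2 \<and> C \<ge> 2 \<and>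
      A * \<alpha> + C * \<beta> - num_digits B A - num_digits B C - R - d \<in> {0..<u * \<alpha> - v * \<beta>}"
    using exists_exponents_in_window[OF assms(1) \<open>\<alpha> > 0\<close> \<open>\<beta> > 0\<close> s(1)] by blast
  obtain P where P: "finite P" "\<And>p. p \<in> P \<Longrightarrow> prime p \<and> q2 < p"
    and excess_P: "G \<le> (\<Sum>p\<in>P. digit_excess B p)" "(\<Sum>p\<in>P. digit_excess B p) < G + 1"
    using exists_primes_digit_excess_window[OF assms(1) \<open>G \<ge> 0\<close>] by blast
  obtain A C where AC: "A \<ge> 2" "C \<ge> 2" and in_window:
    "A * \<alpha> + C * \<beta> - num_digits B A - num_digits B C - R - (\<Sum>p\<in>P. digit_excess B p)
      \<in> {0..<u * \<alpha> - v * \<beta>}"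
    using window[OF excess_P] by blast
  define n where "n = q1 ^ A * q2 ^ C * \<Prod>P"
  define F where "F = num_digits B q1 + num_digits B A + num_digits B q2 + num_digits B C +
      (\<Sum>p\<in>P. num_digits B p)"
  have "n > 0" unfolding n_def using q P by (simp add: prime_gt_0_nat)
  have "coprime m n"
    using assms(2) \<open>n > 0\<close> q P
    by (intro coprime_if_prime_factors_greater)
      (auto simp: n_def prime_factors_prime_powers_times_primes[OF q(1,2,4) P AC] dest: P(2))
  have "fact_digits B n = F"
    unfolding n_def F_def by (rule fact_digits_prime_powers_times_primes[OF q(1,2,4) P AC])
  have "log B n = A * \<alpha> + C * \<beta> + (\<Sum>p\<in>P. log B p)"
    unfolding n_def \<alpha>_def \<beta>_def by (rule log_prime_powers_times_primes[OF q(1,2,4) P AC assms(1)])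
  then have "log B n = real F - 1 +
      (A * \<alpha> + C * \<beta> - num_digits B A - num_digits B C - R - (\<Sum>p\<in>P. digit_excess B p))"
    unfolding F_def R_def digit_excess_def by (simp add: sum_subtractf)
  from num_digits_digit_excess_eqI[OF assms(1) \<open>n > 0\<close> this] in_window s(2)
  have "num_digits B n = F" "1 - \<epsilon> < digit_excess B n" by auto
  with \<open>n > 0\<close> \<open>coprime m n\<close> \<open>fact_digits B n = F\<close> show thesis by (intro that) simp_all
qed

theorem proposition4:
  fixes B m :: nat
  assumes "B \<ge> 2"
    and "m > 0"
    and "\<forall>n::nat. n > 0 \<longrightarrow> economical B n \<longrightarrow> economical B (m * n)"
  shows "frugal B m"
proof -
  obtain n where "n > 0" "coprime m n" and equidigital: "fact_digits B n = num_digits B n"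
    and "1 - digit_excess B m < digit_excess B n"
    using exists_equidigital_with_large_digit_excess[OF assms(1,2) digit_excess_pos[OF assms(1,2)]] .
  have "economical B n" using equidigital by (simp add: economical_def h_fun_def)
  then have "economical B (m * n)" using assms(3) \<open>n > 0\<close> by blast
  moreover have "num_digits B (m * n) = num_digits B m + num_digits B n - 1"
    using \<open>1 - digit_excess B m < digit_excess B n\<close>
    by (intro num_digits_mult[OF assms(1,2) \<open>n > 0\<close>]) simp
  moreover have "fact_digits B (m * n) = fact_digits B m + fact_digits B n"
    by (rule fact_digits_mult_coprime[OF assms(2) \<open>n > 0\<close> \<open>coprime m n\<close>])
  ultimately show ?thesis
    using equidigital num_digits_pos[OF assms(1,2)]
    by (simp add: economical_def frugal_def h_fun_def)
qed

end
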